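(* Let $R$ be a Noetherian hyperring. The following are equivalent: (i) $R$ is Artinian; (ii) $Spec(R)$ with the Zariski topology is discrete and finite; (iii) $Spec(R)$ with the Zariski topology is discrete.
   Context: Standing conventions. A hyperring means a commutative Krasner hyperring with identity: a set $R$ with a hyperoperation $+:R\times R\to\mathcal P^*(R)$ (nonempty subsets; for subsets $A,B$ one sets $A+B=\bigcup_{a\in A,b\in B}a+b$) and a binary operation $\cdot$ such that: $+$ is associative and commutative; there is $0\in R$ with $0+x=\{x\}$ for all $x$; every $x$ has a unique $-x$ with $0\in x+(-x)$; $z\in x+y$ implies $y\in -x+z$ and $x\in z-y$; $(R,\cdot)$ is a commutative monoid with identity $1$; $0\cdot x=0$; and $x(y+z)=xy+xz$. A hyperideal of $R$ is a nonempty $I\subseteq R$ with $a-b\subseteq I$ and $ra\in I$ for all $a,b\in I$, $r\in R$. $R$ is Noetherian (resp. Artinian) if every ascending (resp. descending) chain of hyperideals of $R$ stabilizes. A proper hyperideal $P$ is prime if $ab\in P$ implies $a\in P$ or $b\in P$. $Spec(R)$ is the set of prime hyperideals of $R$; for $S\subseteq R$, $V(S)=\{P\in Spec(R): S\subseteq P\}$. The Zariski topology on $Spec(R)$ is the topology whose closed sets are the sets $V(I)$, $I$ a hyperideal of $R$. *)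

theory Defs
  imports "HOL-Analysis.Analysis"
begin

text \<open>A commutative Krasner hyperring with identity is given by a carrier R,
a hyperaddition add (values are subsets), a multiplication mul, zero z and identity u.\<close>

definition hsum :: "('a \<Rightarrow> 'a \<Rightarrow> 'a set) \<Rightarrow> 'a set \<Rightarrow> 'a set \<Rightarrow> 'a set" where
  "hsum add A B = (\<Union>a\<in>A. \<Union>b\<in>B. add a b)"

definition hneg :: "'a set \<Rightarrow> ('a \<Rightarrow> 'a \<Rightarrow> 'a set) \<Rightarrow> 'a \<Rightarrow> 'a \<Rightarrow> 'a" where
  "hneg R add z x = (THE y. y \<in> R \<and> z \<in> add x y)"

definition hyperring ::
  "'a set \<Rightarrow> ('a \<Rightarrow> 'a \<Rightarrow> 'a set) \<Rightarrow> ('a \<Rightarrow> 'a \<Rightarrow> 'a) \<Rightarrow> 'a \<Rightarrow> 'a \<Rightarrow> bool" where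
  "hyperring R add mul z u \<longleftrightarrow>
     (\<forall>x\<in>R. \<forall>y\<in>R. add x y \<subseteq> R \<and> add x y \<noteq> {}) \<and>
     (\<forall>x\<in>R. \<forall>y\<in>R. \<forall>w\<in>R. hsum add (add x y) {w} = hsum add {x} (add y w)) \<and>
     (\<forall>x\<in>R. \<forall>y\<in>R. add x y = add y x) \<and>
     z \<in> R \<and> (\<forall>x\<in>R. add z x = {x}) \<and>
     (\<forall>x\<in>R. \<exists>!y. y \<in> R \<and> z \<in> add x y) \<and>
     (\<forall>x\<in>R. \<forall>y\<in>R. \<forall>w\<in>R. w \<in> add x y \<longrightarrow>
          y \<in> add (hneg R add z x) w \<and> x \<in> add w (hneg R add z y)) \<and>
     (\<forall>x\<in>R. \<forall>y\<in>R. mul x y \<in> R) \<and>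
     (\<forall>x\<in>R. \<forall>y\<in>R. \<forall>w\<in>R. mul (mul x y) w = mul x (mul y w)) \<and>
     (\<forall>x\<in>R. \<forall>y\<in>R. mul x y = mul y x) \<and>
     u \<in> R \<and> (\<forall>x\<in>R. mul u x = x) \<and>
     (\<forall>x\<in>R. mul z x = z) \<and>
     (\<forall>x\<in>R. \<forall>y\<in>R. \<forall>w\<in>R. mul x ` (add y w) = add (mul x y) (mul x w))"

definition hyperideal ::
  "'a set \<Rightarrow> ('a \<Rightarrow> 'a \<Rightarrow> 'a set) \<Rightarrow> ('a \<Rightarrow> 'a \<Rightarrow> 'a) \<Rightarrow> 'a \<Rightarrow> 'a set \<Rightarrow> bool" where
  "hyperideal R add mul z I \<longleftrightarrow>
     I \<noteq> {} \<and> I \<subseteq> R \<and>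
     (\<forall>a\<in>I. \<forall>b\<in>I. add a (hneg R add z b) \<subseteq> I) \<and>
     (\<forall>r\<in>R. \<forall>a\<in>I. mul r a \<in> I)"

definition hnoetherian ::
  "'a set \<Rightarrow> ('a \<Rightarrow> 'a \<Rightarrow> 'a set) \<Rightarrow> ('a \<Rightarrow> 'a \<Rightarrow> 'a) \<Rightarrow> 'a \<Rightarrow> bool" where
  "hnoetherian R add mul z \<longleftrightarrow>
     (\<forall>I :: nat \<Rightarrow> 'a set. (\<forall>n. hyperideal R add mul z (I n)) \<and> (\<forall>n. I n \<subseteq> I (Suc n))
        \<longrightarrow> (\<exists>m. \<forall>n\<ge>m. I n = I m))"

definition hartinian ::
  "'a set \<Rightarrow> ('a \<Rightarrow> 'a \<Rightarrow> 'a set) \<Rightarrow> ('a \<Rightarrow> 'a \<Rightarrow> 'a) \<Rightarrow> 'a \<Rightarrow> bool" where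
  "hartinian R add mul z \<longleftrightarrow>
     (\<forall>I :: nat \<Rightarrow> 'a set. (\<forall>n. hyperideal R add mul z (I n)) \<and> (\<forall>n. I (Suc n) \<subseteq> I n)
        \<longrightarrow> (\<exists>m. \<forall>n\<ge>m. I n = I m))"

definition prime_hyperideal ::
  "'a set \<Rightarrow> ('a \<Rightarrow> 'a \<Rightarrow> 'a set) \<Rightarrow> ('a \<Rightarrow> 'a \<Rightarrow> 'a) \<Rightarrow> 'a \<Rightarrow> 'a set \<Rightarrow> bool" where
  "prime_hyperideal R add mul z P \<longleftrightarrow>
     hyperideal R add mul z P \<and> P \<noteq> R \<and>
     (\<forall>a\<in>R. \<forall>b\<in>R. mul a b \<in> P \<longrightarrow> a \<in> P \<or> b \<in> P)"

definition hSpec ::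
  "'a set \<Rightarrow> ('a \<Rightarrow> 'a \<Rightarrow> 'a set) \<Rightarrow> ('a \<Rightarrow> 'a \<Rightarrow> 'a) \<Rightarrow> 'a \<Rightarrow> 'a set set" where
  "hSpec R add mul z = {P. prime_hyperideal R add mul z P}"

definition hV ::
  "'a set \<Rightarrow> ('a \<Rightarrow> 'a \<Rightarrow> 'a set) \<Rightarrow> ('a \<Rightarrow> 'a \<Rightarrow> 'a) \<Rightarrow> 'a \<Rightarrow> 'a set \<Rightarrow> 'a set set" where
  "hV R add mul z S = {P \<in> hSpec R add mul z. S \<subseteq> P}"

definition zariski ::
  "'a set \<Rightarrow> ('a \<Rightarrow> 'a \<Rightarrow> 'a set) \<Rightarrow> ('a \<Rightarrow> 'a \<Rightarrow> 'a) \<Rightarrow> 'a \<Rightarrow> 'a set topology" where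
  "zariski R add mul z = topology (\<lambda>U. \<exists>I. hyperideal R add mul z I \<and>
       U = hSpec R add mul z - hV R add mul z I)"

end

theory Submission
  imports Defs
begin

text \<open>Under the Noetherian hypothesis all three conditions are equivalent to every prime
  hyperideal being maximal. An Artinian hyperring has this property, since for a prime P and
  a \<notin> P the chain P + (a^n) stabilizes, which puts 1 into P + (a); and it has finitely many
  primes, since the chain of finite intersections of distinct primes stabilizes while a prime
  containing a finite intersection of hyperideals contains one of them. With finitely many
  primes, all maximal, every subset of Spec is closed. Conversely, if Spec is discrete then each
  point {P} = V(I) is closed, and a proper hyperideal above P lies in a prime (Noetherianity),
  which must be P. Finally a Noetherian hyperring whose primes are maximal is Artinian: a maximal
  hyperideal I above which descending chains need not stabilize is prime, because for a b \<in> I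
  with a, b \<notin> I both I + (a) and I : a lie strictly above I, and a chain J_n above I is
  determined by the chains J_n + (a) and J_n : a; but a prime is maximal, and above a maximal
  hyperideal every descending chain stabilizes.\<close>

lemma stable_from_Suc: "\<forall>n\<ge>m. f n = f m \<Longrightarrow> f (Suc m) = f m"
  using le_Suc_eq by blast

locale comm_hyperring =
  fixes R :: "'a set" and add :: "'a \<Rightarrow> 'a \<Rightarrow> 'a set" and mul :: "'a \<Rightarrow> 'a \<Rightarrow> 'a"
    and z u :: 'a
  assumes hyperring: "hyperring R add mul z u"
begin

abbreviation neg :: "'a \<Rightarrow> 'a" where "neg x \<equiv> hneg R add z x"

lemma add_closed: "x \<in> R \<Longrightarrow> y \<in> R \<Longrightarrow> add x y \<subseteq> R"
  using hyperring unfolding hyperring_def by meson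

lemma add_assoc_hsum:
  "x \<in> R \<Longrightarrow> y \<in> R \<Longrightarrow> w \<in> R \<Longrightarrow> hsum add (add x y) {w} = hsum add {x} (add y w)"
  using hyperring unfolding hyperring_def by meson

lemma add_comm: "x \<in> R \<Longrightarrow> y \<in> R \<Longrightarrow> add x y = add y x"
  using hyperring unfolding hyperring_def by meson

lemma zero_closed: "z \<in> R"
  using hyperring unfolding hyperring_def by meson

lemma add_zero_left: "x \<in> R \<Longrightarrow> add z x = {x}"
  using hyperring unfolding hyperring_def by meson

lemma add_zero_right: "x \<in> R \<Longrightarrow> add x z = {x}"
  using add_zero_left add_comm zero_closed by metis

lemma neg_ex1: assumes "x \<in> R" shows "\<exists>!y. y \<in> R \<and> z \<in> add x y"
proof -
  have "\<forall>x\<in>R. \<exists>!y. y \<in> R \<and> z \<in> add x y"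
    using hyperring unfolding hyperring_def by (elim conjE) assumption
  then show ?thesis using assms ..
qed

lemma reversibility:
  "x \<in> R \<Longrightarrow> y \<in> R \<Longrightarrow> w \<in> R \<Longrightarrow> w \<in> add x y \<Longrightarrow> y \<in> add (neg x) w \<and> x \<in> add w (neg y)"
  using hyperring unfolding hyperring_def by meson

lemma mul_closed: "x \<in> R \<Longrightarrow> y \<in> R \<Longrightarrow> mul x y \<in> R"
  using hyperring unfolding hyperring_def by meson

lemma mul_assoc: "x \<in> R \<Longrightarrow> y \<in> R \<Longrightarrow> w \<in> R \<Longrightarrow> mul (mul x y) w = mul x (mul y w)"
  using hyperring unfolding hyperring_def by meson

lemma mul_comm: "x \<in> R \<Longrightarrow> y \<in> R \<Longrightarrow> mul x y = mul y x"
  using hyperring unfolding hyperring_def by meson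

lemma one_closed: "u \<in> R"
  using hyperring unfolding hyperring_def by meson

lemma mul_one_left: "x \<in> R \<Longrightarrow> mul u x = x"
  using hyperring unfolding hyperring_def by meson

lemma mul_one_right: "x \<in> R \<Longrightarrow> mul x u = x"
  using mul_one_left mul_comm one_closed by metis

lemma mul_zero_left: "x \<in> R \<Longrightarrow> mul z x = z"
  using hyperring unfolding hyperring_def by meson

lemma mul_zero_right: "x \<in> R \<Longrightarrow> mul x z = z"
  using mul_zero_left mul_comm zero_closed by metis

lemma mul_distrib: "x \<in> R \<Longrightarrow> y \<in> R \<Longrightarrow> w \<in> R \<Longrightarrow> mul x ` add y w = add (mul x y) (mul x w)"
  using hyperring unfolding hyperring_def by meson

lemma neg_closed: "x \<in> R \<Longrightarrow> neg x \<in> R"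
  and zero_in_add_neg: "x \<in> R \<Longrightarrow> z \<in> add x (neg x)"
  using theI'[OF neg_ex1] unfolding hneg_def by blast+

lemma neg_unique: "x \<in> R \<Longrightarrow> y \<in> R \<Longrightarrow> z \<in> add x y \<Longrightarrow> y = neg x"
  using neg_ex1 neg_closed zero_in_add_neg by blast

lemma neg_neg: "x \<in> R \<Longrightarrow> neg (neg x) = x"
  by (metis add_comm neg_closed zero_in_add_neg neg_unique)

lemma neg_zero: "neg z = z"
  by (metis add_zero_left singletonD zero_closed neg_closed zero_in_add_neg)

lemma add_assoc_left:
  assumes "a \<in> R" "b \<in> R" "c \<in> R" "t \<in> add a b" "w \<in> add t c"
  obtains s where "s \<in> add b c" "w \<in> add a s"
proof -
  have "w \<in> hsum add (add a b) {c}" using assms unfolding hsum_def by blast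
  then show ?thesis using that add_assoc_hsum[OF assms(1-3)] unfolding hsum_def by blast
qed

lemma add_assoc_right:
  assumes "a \<in> R" "b \<in> R" "c \<in> R" "s \<in> add b c" "w \<in> add a s"
  obtains t where "t \<in> add a b" "w \<in> add t c"
proof -
  have "w \<in> hsum add {a} (add b c)" using assms unfolding hsum_def by blast
  then show ?thesis using that add_assoc_hsum[OF assms(1-3)] unfolding hsum_def by blast
qed

lemma mul_neg: assumes "x \<in> R" "y \<in> R" shows "mul x (neg y) = neg (mul x y)"
proof -
  have "mul x z \<in> mul x ` add y (neg y)" using zero_in_add_neg[OF assms(2)] by blast
  then have "z \<in> add (mul x y) (mul x (neg y))"
    using mul_distrib[OF assms neg_closed[OF assms(2)]] mul_zero_right[OF assms(1)] by simp
  then show ?thesis using neg_unique mul_closed assms neg_closed by blast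
qed

lemma neg_add: assumes "x \<in> R" "y \<in> R" "w \<in> add x y" shows "neg w \<in> add (neg x) (neg y)"
proof -
  have neg_eq: "neg v = mul (neg u) v" if "v \<in> R" for v
    using mul_neg[OF that one_closed] mul_one_right[OF that] mul_comm[OF that neg_closed[OF one_closed]]
    by simp
  have "mul (neg u) w \<in> mul (neg u) ` add x y" using assms by blast
  then show ?thesis
    using mul_distrib[OF neg_closed[OF one_closed] assms(1,2)] neg_eq assms add_closed by (metis subsetD)
qed

lemma add_diff_rearrange:
  assumes R: "i1 \<in> R" "j1 \<in> R" "i2 \<in> R" "j2 \<in> R"
    and x: "x \<in> add i1 j1" and y: "y \<in> add i2 j2" and w: "w \<in> add x (neg y)"
  obtains p q where "p \<in> add i1 (neg i2)" "q \<in> add j1 (neg j2)" "w \<in> add p q"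
proof -
  have xR: "x \<in> R" and yR: "y \<in> R" using x y add_closed R by blast+
  have negR: "neg i2 \<in> R" "neg j2 \<in> R" "neg y \<in> R" using neg_closed R yR by auto
  obtain s where s: "s \<in> add j1 (neg y)" and ws: "w \<in> add i1 s"
    using add_assoc_left[OF R(1,2) negR(3) x w] .
  have "neg y \<in> add (neg i2) (neg j2)" using neg_add[OF R(3,4) y] .
  moreover have "s \<in> add (neg y) j1" using s add_comm R negR by auto
  ultimately obtain q where q: "q \<in> add (neg j2) j1" and sq: "s \<in> add (neg i2) q"
    using add_assoc_left[OF negR(1,2) R(2)] by blast
  have qR: "q \<in> R" using q add_closed R negR by blast
  obtain p where "p \<in> add i1 (neg i2)" "w \<in> add p q"
    using add_assoc_right[OF R(1) negR(1) qR sq ws] .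
  moreover have "q \<in> add j1 (neg j2)" using q add_comm R negR by auto
  ultimately show ?thesis using that by blast
qed

abbreviation ideal :: "'a set \<Rightarrow> bool" where "ideal I \<equiv> hyperideal R add mul z I"

lemma idealD:
  assumes "ideal I"
  shows "I \<subseteq> R" "\<And>a b. a \<in> I \<Longrightarrow> b \<in> I \<Longrightarrow> add a (neg b) \<subseteq> I" "\<And>r a. r \<in> R \<Longrightarrow> a \<in> I \<Longrightarrow> mul r a \<in> I"
  using assms unfolding hyperideal_def by blast+

lemma idealI:
  assumes "z \<in> I" "I \<subseteq> R" "\<And>a b. a \<in> I \<Longrightarrow> b \<in> I \<Longrightarrow> add a (neg b) \<subseteq> I"
    "\<And>r a. r \<in> R \<Longrightarrow> a \<in> I \<Longrightarrow> mul r a \<in> I"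
  shows "ideal I"
  using assms unfolding hyperideal_def by blast

lemma ideal_zero_in: assumes "ideal I" shows "z \<in> I"
proof -
  obtain a where a: "a \<in> I" using assms unfolding hyperideal_def by blast
  then show ?thesis using zero_in_add_neg idealD[OF assms] by blast
qed

lemma ideal_neg: assumes "ideal I" "a \<in> I" shows "neg a \<in> I"
proof -
  have "add z (neg a) \<subseteq> I" using idealD(2)[OF assms(1) ideal_zero_in[OF assms(1)] assms(2)] .
  then show ?thesis using add_zero_left neg_closed idealD(1)[OF assms(1)] assms(2) by blast
qed

lemma ideal_add: assumes "ideal I" "a \<in> I" "b \<in> I" shows "add a b \<subseteq> I"
proof -
  have "b \<in> R" using idealD(1)[OF assms(1)] assms(3) by blast
  then show ?thesis using idealD(2)[OF assms(1,2) ideal_neg[OF assms(1,3)]] neg_neg by simp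
qed

lemma ideal_mul_right: "ideal I \<Longrightarrow> r \<in> R \<Longrightarrow> a \<in> I \<Longrightarrow> mul a r \<in> I"
  using idealD mul_comm by (metis subsetD)

lemma ideal_carrier: "ideal R"
  by (rule idealI) (use zero_closed add_closed neg_closed mul_closed in auto)

lemma ideal_zero: "ideal {z}"
  by (rule idealI) (use zero_closed add_zero_left neg_zero mul_zero_right in auto)

lemma ideal_one_eq_carrier: assumes "ideal I" "u \<in> I" shows "I = R"
  using idealD(1,3)[OF assms(1)] assms(2) mul_one_right by force

lemma ideal_Inter: assumes "K \<noteq> {}" "\<And>I. I \<in> K \<Longrightarrow> ideal I" shows "ideal (\<Inter>K)"
proof (rule idealI)
  show "z \<in> \<Inter>K" using ideal_zero_in assms(2) by blast
  show "\<Inter>K \<subseteq> R" using assms idealD(1) by blast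
qed (use idealD(2,3)[OF assms(2)] in blast)+

lemma ideal_Int: "ideal I \<Longrightarrow> ideal J \<Longrightarrow> ideal (I \<inter> J)"
  using ideal_Inter[of "{I, J}"] by auto

definition ideal_sum :: "'a set \<Rightarrow> 'a set \<Rightarrow> 'a set" where
  "ideal_sum I J = {x \<in> R. \<exists>i\<in>I. \<exists>j\<in>J. x \<in> add i j}"

lemma ideal_ideal_sum: assumes I: "ideal I" and J: "ideal J" shows "ideal (ideal_sum I J)"
proof (rule idealI)
  show "z \<in> ideal_sum I J"
    unfolding ideal_sum_def using zero_closed ideal_zero_in[OF I] ideal_zero_in[OF J] add_zero_left
    by blast
  show "ideal_sum I J \<subseteq> R" unfolding ideal_sum_def by blast
next
  fix x y assume x: "x \<in> ideal_sum I J" and y: "y \<in> ideal_sum I J"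
  show "add x (neg y) \<subseteq> ideal_sum I J"
  proof
    fix w assume w: "w \<in> add x (neg y)"
    obtain i1 j1 i2 j2 where ij: "i1 \<in> I" "j1 \<in> J" "i2 \<in> I" "j2 \<in> J"
      and xij: "x \<in> add i1 j1" and yij: "y \<in> add i2 j2" and xyR: "x \<in> R" "y \<in> R"
      using x y unfolding ideal_sum_def by blast
    have ijR: "i1 \<in> R" "j1 \<in> R" "i2 \<in> R" "j2 \<in> R" using ij idealD(1) I J by auto
    obtain p q where "p \<in> add i1 (neg i2)" "q \<in> add j1 (neg j2)" and wpq: "w \<in> add p q"
      using add_diff_rearrange[OF ijR xij yij w] .
    then have "p \<in> I" "q \<in> J" using idealD(2)[OF I] idealD(2)[OF J] ij by blast+
    moreover have "w \<in> R" using w add_closed xyR neg_closed by blast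
    ultimately show "w \<in> ideal_sum I J" unfolding ideal_sum_def using wpq by blast
  qed
next
  fix r x assume r: "r \<in> R" and "x \<in> ideal_sum I J"
  then obtain i j where ij: "i \<in> I" "j \<in> J" and xij: "x \<in> add i j" and xR: "x \<in> R"
    unfolding ideal_sum_def by blast
  have ijR: "i \<in> R" "j \<in> R" using ij idealD(1) I J by auto
  have "mul r x \<in> add (mul r i) (mul r j)"
    using mul_distrib[OF r ijR] xij by blast
  moreover have "mul r i \<in> I" "mul r j \<in> J" using idealD(3)[OF I r] idealD(3)[OF J r] ij by blast+
  ultimately show "mul r x \<in> ideal_sum I J"
    unfolding ideal_sum_def using mul_closed[OF r xR] by blast
qed

lemma ideal_sum_upper1: assumes "ideal I" "ideal J" shows "I \<subseteq> ideal_sum I J"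
  unfolding ideal_sum_def using idealD(1)[OF assms(1)] ideal_zero_in[OF assms(2)] add_zero_right
  by blast

lemma ideal_sum_upper2: assumes "ideal I" "ideal J" shows "J \<subseteq> ideal_sum I J"
  unfolding ideal_sum_def using idealD(1)[OF assms(2)] ideal_zero_in[OF assms(1)] add_zero_left
  by blast

lemma ideal_sum_mono: "I \<subseteq> I' \<Longrightarrow> J \<subseteq> J' \<Longrightarrow> ideal_sum I J \<subseteq> ideal_sum I' J'"
  unfolding ideal_sum_def by blast

definition principal_ideal :: "'a \<Rightarrow> 'a set" where
  "principal_ideal a = (\<lambda>r. mul r a) ` R"

lemma ideal_principal: assumes a: "a \<in> R" shows "ideal (principal_ideal a)"
proof (rule idealI)
  show "z \<in> principal_ideal a" unfolding principal_ideal_def using zero_closed mul_zero_left a by force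
  show "principal_ideal a \<subseteq> R" unfolding principal_ideal_def using mul_closed a by blast
next
  fix x y assume "x \<in> principal_ideal a" "y \<in> principal_ideal a"
  then obtain r s where r: "r \<in> R" "x = mul a r" and s: "s \<in> R" "y = mul a s"
    unfolding principal_ideal_def using mul_comm a by blast
  have "add x (neg y) = mul a ` add r (neg s)"
    using mul_distrib[OF a r(1) neg_closed[OF s(1)]] mul_neg[OF a s(1)] r s by simp
  also have "\<dots> \<subseteq> principal_ideal a"
    unfolding principal_ideal_def using add_closed[OF r(1) neg_closed[OF s(1)]] mul_comm a by blast
  finally show "add x (neg y) \<subseteq> principal_ideal a" .
next
  fix t x assume t: "t \<in> R" and "x \<in> principal_ideal a"
  then obtain r where r: "r \<in> R" "x = mul r a" unfolding principal_ideal_def by blast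
  then have "mul t x = mul (mul t r) a" using mul_assoc[OF t r(1) a] by simp
  then show "mul t x \<in> principal_ideal a" unfolding principal_ideal_def using mul_closed[OF t r(1)] by blast
qed

lemma principal_ideal_self: "a \<in> R \<Longrightarrow> a \<in> principal_ideal a"
  unfolding principal_ideal_def using one_closed mul_one_left by force

lemma principal_ideal_mul_subset: assumes "a \<in> R" "x \<in> R" shows "principal_ideal (mul a x) \<subseteq> principal_ideal x"
proof
  fix y assume "y \<in> principal_ideal (mul a x)"
  then obtain r where "r \<in> R" "y = mul (mul r a) x"
    unfolding principal_ideal_def using mul_assoc assms by auto
  then show "y \<in> principal_ideal x" unfolding principal_ideal_def using mul_closed assms(1) by blast
qed

definition colon :: "'a set \<Rightarrow> 'a \<Rightarrow> 'a set" where
  "colon J a = {r \<in> R. mul r a \<in> J}"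

lemma ideal_colon: assumes J: "ideal J" and a: "a \<in> R" shows "ideal (colon J a)"
proof (rule idealI)
  show "z \<in> colon J a" unfolding colon_def using zero_closed mul_zero_left a ideal_zero_in[OF J] by simp
  show "colon J a \<subseteq> R" unfolding colon_def by blast
next
  fix r s assume r: "r \<in> colon J a" and s: "s \<in> colon J a"
  show "add r (neg s) \<subseteq> colon J a"
  proof
    fix w assume w: "w \<in> add r (neg s)"
    have rR: "r \<in> R" and sR: "s \<in> R" using r s unfolding colon_def by auto
    have wR: "w \<in> R" using w add_closed rR neg_closed[OF sR] by blast
    have "mul a w \<in> add (mul a r) (mul a (neg s))" using mul_distrib[OF a rR neg_closed[OF sR]] w by blast
    then have "mul w a \<in> add (mul r a) (neg (mul s a))"
      using mul_neg[OF a sR] mul_comm a rR sR wR by auto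
    moreover have "add (mul r a) (neg (mul s a)) \<subseteq> J" using idealD(2)[OF J] r s unfolding colon_def by blast
    ultimately show "w \<in> colon J a" unfolding colon_def using wR by blast
  qed
next
  show "\<And>t r. t \<in> R \<Longrightarrow> r \<in> colon J a \<Longrightarrow> mul t r \<in> colon J a"
    unfolding colon_def using mul_assoc idealD(3)[OF J] mul_closed a by auto
qed

lemma colon_mono: "J' \<subseteq> J \<Longrightarrow> colon J' a \<subseteq> colon J a"
  unfolding colon_def by blast

lemma subset_colon: assumes "ideal I" "a \<in> R" shows "I \<subseteq> colon I a"
  unfolding colon_def using ideal_mul_right[OF assms] idealD(1)[OF assms(1)] by blast

lemma ideal_eq_by_sum_and_colon:
  assumes J: "ideal J" and J': "ideal J'" and sub: "J' \<subseteq> J" and a: "a \<in> R"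
    and sum_eq: "ideal_sum J (principal_ideal a) = ideal_sum J' (principal_ideal a)"
    and colon_eq: "colon J a = colon J' a"
  shows "J = J'"
proof
  show "J \<subseteq> J'"
  proof
    fix x assume x: "x \<in> J"
    have "x \<in> ideal_sum J' (principal_ideal a)"
      using ideal_sum_upper1[OF J ideal_principal[OF a]] x sum_eq by blast
    then obtain j r where j: "j \<in> J'" and r: "r \<in> R" and xy: "x \<in> add j (mul r a)"
      unfolding ideal_sum_def principal_ideal_def by blast
    have R: "x \<in> R" "j \<in> R" "mul r a \<in> R" using x j idealD(1) J J' mul_closed r a by auto
    have "mul r a \<in> add (neg j) x" using reversibility[OF R(2,3,1) xy] by blast
    also have "\<dots> \<subseteq> J" using idealD(2)[OF J x] j sub add_comm neg_closed R by auto
    finally have "r \<in> colon J a" unfolding colon_def using r by simp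
    then have "mul r a \<in> J'" using colon_eq unfolding colon_def by blast
    then show "x \<in> J'" using ideal_add[OF J' j] xy by blast
  qed
qed (rule sub)

abbreviation prime_ideal :: "'a set \<Rightarrow> bool" where
  "prime_ideal P \<equiv> prime_hyperideal R add mul z P"

lemma prime_idealD:
  assumes "prime_ideal P"
  shows "ideal P" "P \<noteq> R" "\<And>a b. a \<in> R \<Longrightarrow> b \<in> R \<Longrightarrow> mul a b \<in> P \<Longrightarrow> a \<in> P \<or> b \<in> P"
  using assms unfolding prime_hyperideal_def by auto

lemma prime_ideal_one_notin: "prime_ideal P \<Longrightarrow> u \<notin> P"
  using ideal_one_eq_carrier[OF prime_idealD(1)] prime_idealD(2) by blast

lemma prime_ideal_Int_subset:
  assumes P: "prime_ideal P" and I: "ideal I" and J: "ideal J" and sub: "I \<inter> J \<subseteq> P"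
  shows "I \<subseteq> P \<or> J \<subseteq> P"
proof (rule ccontr)
  assume "\<not> (I \<subseteq> P \<or> J \<subseteq> P)"
  then obtain a b where a: "a \<in> I" "a \<notin> P" and b: "b \<in> J" "b \<notin> P" by blast
  have R: "a \<in> R" "b \<in> R" using a b idealD(1) I J by auto
  have "mul a b \<in> I \<inter> J" using ideal_mul_right[OF I R(2) a(1)] idealD(3)[OF J R(1) b(1)] by blast
  then show False using prime_idealD(3)[OF P R] sub a(2) b(2) by blast
qed

lemma prime_ideal_Inter_subset:
  assumes P: "prime_ideal P" and "finite F" "F \<noteq> {}" "\<And>I. I \<in> F \<Longrightarrow> ideal I" "\<Inter>F \<subseteq> P"
  shows "\<exists>I\<in>F. I \<subseteq> P"
  using assms(2-)
proof (induction F rule: finite_ne_induct)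
  case (insert I F)
  then have "I \<subseteq> P \<or> \<Inter>F \<subseteq> P" using prime_ideal_Int_subset[OF P] ideal_Inter by auto
  then show ?case using insert by auto
qed auto

lemma maximal_imp_prime_ideal:
  assumes M: "ideal M" "M \<noteq> R" and max: "\<And>J. ideal J \<Longrightarrow> M \<subseteq> J \<Longrightarrow> J = M \<or> J = R"
  shows "prime_ideal M"
proof -
  have "b \<in> M" if a: "a \<in> R" and b: "b \<in> R" and ab: "mul a b \<in> M" and "a \<notin> M" for a b
  proof -
    let ?K = "ideal_sum M (principal_ideal a)"
    have "a \<in> ?K"
      using ideal_sum_upper2[OF M(1) ideal_principal[OF a]] principal_ideal_self[OF a] by blast
    then have "?K = R"
      using max[OF ideal_ideal_sum[OF M(1) ideal_principal[OF a]] ideal_sum_upper1[OF M(1) ideal_principal[OF a]]]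
        \<open>a \<notin> M\<close> by blast
    then obtain m r where m: "m \<in> M" and r: "r \<in> R" and um: "u \<in> add m (mul r a)"
      using one_closed unfolding ideal_sum_def principal_ideal_def by blast
    have mR: "m \<in> R" using m idealD(1)[OF M(1)] by blast
    have "mul b u \<in> mul b ` add m (mul r a)" using um by blast
    then have "b \<in> add (mul b m) (mul b (mul r a))"
      using mul_distrib[OF b mR mul_closed[OF r a]] mul_one_right[OF b] by simp
    moreover have "mul b (mul r a) = mul r (mul a b)"
      using mul_assoc[OF b r a] mul_comm[OF b r] mul_assoc[OF r b a] mul_comm[OF a b] by simp
    ultimately show "b \<in> M"
      using ideal_add[OF M(1) idealD(3)[OF M(1) b m] idealD(3)[OF M(1) r ab]] by auto
  qed
  then show ?thesis unfolding prime_hyperideal_def using M by blast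
qed

definition zero_dimensional :: bool where
  "zero_dimensional \<longleftrightarrow> (\<forall>P J. prime_ideal P \<longrightarrow> ideal J \<longrightarrow> P \<subseteq> J \<longrightarrow> J = P \<or> J = R)"

lemma zero_dimensionalD:
  "zero_dimensional \<Longrightarrow> prime_ideal P \<Longrightarrow> ideal J \<Longrightarrow> P \<subseteq> J \<Longrightarrow> J = P \<or> J = R"
  unfolding zero_dimensional_def by blast

lemma noetherian_has_maximal:
  assumes N: "hnoetherian R add mul z" and "S \<noteq> {}" and S: "\<And>I. I \<in> S \<Longrightarrow> ideal I"
  obtains M where "M \<in> S" "\<And>J. J \<in> S \<Longrightarrow> M \<subseteq> J \<Longrightarrow> J = M"
proof -
  let ?r = "{(J, I). ideal I \<and> ideal J \<and> I \<subset> J}"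
  have "wf ?r"
    unfolding wf_iff_no_infinite_down_chain
  proof
    assume "\<exists>f. \<forall>i. (f (Suc i), f i) \<in> ?r"
    then obtain f where f: "\<forall>i. (f (Suc i), f i) \<in> ?r" ..
    then have chain: "\<And>i. ideal (f i)" "\<And>i. f i \<subset> f (Suc i)" by simp_all
    have "\<exists>m. \<forall>n\<ge>m. f n = f m"
      using chain by (intro N[unfolded hnoetherian_def, rule_format]) (simp add: psubset_imp_subset)
    then show False using chain(2) stable_from_Suc by blast
  qed
  then obtain M where M: "M \<in> S" and min: "\<And>J. (J, M) \<in> ?r \<Longrightarrow> J \<notin> S"
    using wfE_min'[OF \<open>wf ?r\<close> \<open>S \<noteq> {}\<close>] by blast
  show ?thesis
  proof (rule that[OF M])
    fix J assume "J \<in> S" "M \<subseteq> J"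
    then show "J = M" using min[of J] S M by blast
  qed
qed

lemma noetherian_prime_ideal_above:
  assumes N: "hnoetherian R add mul z" and J: "ideal J" "J \<noteq> R"
  obtains M where "prime_ideal M" "J \<subseteq> M"
proof -
  let ?S = "{K. ideal K \<and> J \<subseteq> K \<and> K \<noteq> R}"
  have "?S \<noteq> {}" using J by blast
  then obtain M where M: "M \<in> ?S" and max: "\<And>K. K \<in> ?S \<Longrightarrow> M \<subseteq> K \<Longrightarrow> K = M"
    by (rule noetherian_has_maximal[OF N]) (simp, blast)
  have "prime_ideal M"
  proof (rule maximal_imp_prime_ideal)
    show "ideal M" "M \<noteq> R" using M by auto
    show "K = M \<or> K = R" if "ideal K" "M \<subseteq> K" for K
      using max[of K] that M by blast
  qed
  then show ?thesis using that M by blast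
qed

definition artinian_above :: "'a set \<Rightarrow> bool" where
  "artinian_above I \<longleftrightarrow> (\<forall>J :: nat \<Rightarrow> 'a set. (\<forall>n. ideal (J n)) \<and> (\<forall>n. J (Suc n) \<subseteq> J n)
     \<and> (\<forall>n. I \<subseteq> J n) \<longrightarrow> (\<exists>m. \<forall>n\<ge>m. J n = J m))"

lemma artinian_aboveD:
  "artinian_above I \<Longrightarrow> (\<And>n. ideal (J n)) \<Longrightarrow> (\<And>n. J (Suc n) \<subseteq> J n) \<Longrightarrow> (\<And>n. I \<subseteq> J n)
    \<Longrightarrow> \<exists>m. \<forall>n\<ge>m. J n = J m"
  unfolding artinian_above_def by blast

lemma artinian_if_artinian_above_zero: "artinian_above {z} \<Longrightarrow> hartinian R add mul z"
  unfolding hartinian_def artinian_above_def using ideal_zero_in by blast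

lemma artinian_above_maximal:
  assumes I: "ideal I" and max: "\<And>K. ideal K \<Longrightarrow> I \<subseteq> K \<Longrightarrow> K = I \<or> K = R"
  shows "artinian_above I"
  unfolding artinian_above_def
proof (intro allI impI)
  fix J :: "nat \<Rightarrow> 'a set"
  assume J: "(\<forall>n. ideal (J n)) \<and> (\<forall>n. J (Suc n) \<subseteq> J n) \<and> (\<forall>n. I \<subseteq> J n)"
  then have "decseq J" by (simp add: decseq_Suc_iff)
  show "\<exists>m. \<forall>n\<ge>m. J n = J m"
  proof (cases "\<exists>m. J m = I")
    case True
    then show ?thesis using J decseqD[OF \<open>decseq J\<close>] by (metis subset_antisym)
  next
    case False
    then have "J n = R" for n using max J by blast
    then show ?thesis by simp
  qed
qed

lemma descending_chain_stable:
  assumes "\<And>n. m \<le> n \<Longrightarrow> J (Suc n) = J n"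
  shows "\<forall>n\<ge>m. J n = J m"
proof (intro allI impI)
  fix n assume "m \<le> n"
  then show "J n = J m" by (induction n rule: dec_induct) (use assms in simp_all)
qed

lemma artinian_above_by_sum_and_colon:
  assumes I: "ideal I" and a: "a \<in> R"
    and sum: "artinian_above (ideal_sum I (principal_ideal a))" and col: "artinian_above (colon I a)"
  shows "artinian_above I"
  unfolding artinian_above_def
proof (intro allI impI)
  fix J :: "nat \<Rightarrow> 'a set"
  assume "(\<forall>n. ideal (J n)) \<and> (\<forall>n. J (Suc n) \<subseteq> J n) \<and> (\<forall>n. I \<subseteq> J n)"
  then have J: "\<And>n. ideal (J n)" and dec: "\<And>n. J (Suc n) \<subseteq> J n" and IJ: "\<And>n. I \<subseteq> J n"
    by simp_all
  let ?S = "\<lambda>n. ideal_sum (J n) (principal_ideal a)" and ?C = "\<lambda>n. colon (J n) a"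
  have "\<exists>m. \<forall>n\<ge>m. ?S n = ?S m"
  proof (rule artinian_aboveD[OF sum])
    show "ideal (?S n)" for n using ideal_ideal_sum[OF J ideal_principal[OF a]] .
    show "?S (Suc n) \<subseteq> ?S n" for n using ideal_sum_mono[OF dec order_refl] .
    show "ideal_sum I (principal_ideal a) \<subseteq> ?S n" for n using ideal_sum_mono[OF IJ order_refl] .
  qed
  then obtain m1 where m1: "\<And>n. m1 \<le> n \<Longrightarrow> ?S n = ?S m1" by blast
  have "\<exists>m. \<forall>n\<ge>m. ?C n = ?C m"
  proof (rule artinian_aboveD[OF col])
    show "ideal (?C n)" for n using ideal_colon[OF J a] .
    show "?C (Suc n) \<subseteq> ?C n" for n using colon_mono[OF dec] .
    show "colon I a \<subseteq> ?C n" for n using colon_mono[OF IJ] .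
  qed
  then obtain m2 where m2: "\<And>n. m2 \<le> n \<Longrightarrow> ?C n = ?C m2" by blast
  have "J (Suc n) = J n" if "max m1 m2 \<le> n" for n
  proof (rule ideal_eq_by_sum_and_colon[OF J J dec a, symmetric])
    have "m1 \<le> n" "m1 \<le> Suc n" "m2 \<le> n" "m2 \<le> Suc n" using that by simp_all
    then show "?S n = ?S (Suc n)" "?C n = ?C (Suc n)"
      using m1 m2 by metis+
  qed
  then show "\<exists>m. \<forall>n\<ge>m. J n = J m" using descending_chain_stable by blast
qed

lemma maximal_non_artinian_above_prime:
  assumes I: "ideal I" and not_art: "\<not> artinian_above I"
    and above: "\<And>K. ideal K \<Longrightarrow> I \<subset> K \<Longrightarrow> artinian_above K"
  shows "prime_ideal I"
proof -
  have "artinian_above R"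
    by (rule artinian_above_maximal[OF ideal_carrier]) (use idealD(1) in blast)
  then have "I \<noteq> R" using not_art by blast
  moreover have "a \<in> I \<or> b \<in> I" if a: "a \<in> R" and b: "b \<in> R" and ab: "mul a b \<in> I" for a b
  proof (rule ccontr)
    assume nab: "\<not> (a \<in> I \<or> b \<in> I)"
    let ?K = "ideal_sum I (principal_ideal a)"
    have "a \<in> ?K"
      using ideal_sum_upper2[OF I ideal_principal[OF a]] principal_ideal_self[OF a] by blast
    then have "I \<subset> ?K" using ideal_sum_upper1[OF I ideal_principal[OF a]] nab by blast
    then have "artinian_above ?K" using above[OF ideal_ideal_sum[OF I ideal_principal[OF a]]] by blast
    moreover have "b \<in> colon I a" unfolding colon_def using ab mul_comm[OF a b] b by simp
    then have "I \<subset> colon I a" using subset_colon[OF I a] nab by blast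
    then have "artinian_above (colon I a)" using above[OF ideal_colon[OF I a]] by blast
    ultimately show False using artinian_above_by_sum_and_colon[OF I a] not_art by blast
  qed
  ultimately show ?thesis unfolding prime_hyperideal_def using I by blast
qed

lemma noetherian_zero_dimensional_imp_artinian:
  assumes N: "hnoetherian R add mul z" and zd: zero_dimensional
  shows "hartinian R add mul z"
proof (rule ccontr)
  let ?S = "{I. ideal I \<and> \<not> artinian_above I}"
  assume "\<not> hartinian R add mul z"
  then have "{z} \<in> ?S" using artinian_if_artinian_above_zero ideal_zero by blast
  then have "?S \<noteq> {}" by blast
  then obtain I where "I \<in> ?S" and max: "\<And>K. K \<in> ?S \<Longrightarrow> I \<subseteq> K \<Longrightarrow> K = I"
    by (rule noetherian_has_maximal[OF N]) (simp, blast)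
  then have I: "ideal I" "\<not> artinian_above I" by simp_all
  have "prime_ideal I"
  proof (rule maximal_non_artinian_above_prime[OF I])
    show "artinian_above K" if "ideal K" "I \<subset> K" for K
      using max[of K] that by blast
  qed
  then have "artinian_above I"
    using artinian_above_maximal[OF I(1)] zero_dimensionalD[OF zd] by blast
  then show False using I(2) by blast
qed

definition hpow :: "'a \<Rightarrow> nat \<Rightarrow> 'a" where
  "hpow a n = (mul a ^^ n) u"

lemma hpow_0 [simp]: "hpow a 0 = u"
  and hpow_Suc [simp]: "hpow a (Suc n) = mul a (hpow a n)"
  by (simp_all add: hpow_def)

lemma hpow_closed: "a \<in> R \<Longrightarrow> hpow a n \<in> R"
  by (induction n) (auto simp: one_closed mul_closed)

lemma hpow_notin_prime_ideal:
  assumes P: "prime_ideal P" and a: "a \<in> R" "a \<notin> P" shows "hpow a n \<notin> P"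
  by (induction n) (use prime_ideal_one_notin[OF P] prime_idealD(3)[OF P] a hpow_closed in auto)

text \<open>The chain P + (a^n) stabilizes at some c = a^m, so c = p + c a r with p \<in> P. Then
  p = c (1 - a r), hence 1 - a r \<in> P \<subseteq> J, and 1 \<in> J because a r \<in> J.\<close>

lemma artinian_imp_zero_dimensional:
  assumes art: "hartinian R add mul z" shows zero_dimensional
  unfolding zero_dimensional_def
proof (intro allI impI)
  fix P J assume P: "prime_ideal P" and J: "ideal J" and PJ: "P \<subseteq> J"
  show "J = P \<or> J = R"
  proof (cases "J = P")
    case False
    then obtain a where a: "a \<in> J" "a \<notin> P" using PJ by blast
    have aR: "a \<in> R" using a idealD(1)[OF J] by blast
    have PI: "ideal P" using prime_idealD(1)[OF P] .
    define K where "K n = ideal_sum P (principal_ideal (hpow a n))" for n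
    have "(\<forall>n. ideal (K n)) \<and> (\<forall>n. K (Suc n) \<subseteq> K n)"
      unfolding K_def
      using ideal_ideal_sum[OF PI ideal_principal[OF hpow_closed[OF aR]]]
        ideal_sum_mono[OF order_refl principal_ideal_mul_subset[OF aR hpow_closed[OF aR]]] by simp
    then obtain m where "\<forall>n\<ge>m. K n = K m"
      using art[unfolded hartinian_def, rule_format, of K] by blast
    then have "K (Suc m) = K m" by (rule stable_from_Suc)
    define c where "c = hpow a m"
    have cR: "c \<in> R" unfolding c_def using hpow_closed[OF aR] .
    have "c \<in> K m"
      unfolding K_def c_def
      using ideal_sum_upper2[OF PI ideal_principal[OF cR[unfolded c_def]]] principal_ideal_self[OF cR[unfolded c_def]]
      by blast
    also have "K m = K (Suc m)" using \<open>K (Suc m) = K m\<close> ..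
    also have "\<dots> = ideal_sum P (principal_ideal (mul a c))" unfolding K_def c_def by simp
    finally obtain p r where p: "p \<in> P" and r: "r \<in> R" and cp: "c \<in> add p (mul r (mul a c))"
      unfolding ideal_sum_def principal_ideal_def by blast
    define t0 where "t0 = mul r a"
    have t0: "t0 \<in> R" "t0 \<in> J" unfolding t0_def using mul_closed[OF r aR] idealD(3)[OF J r a(1)] by auto
    have "mul r (mul a c) = mul c t0"
      unfolding t0_def using mul_assoc[OF r aR cR] mul_comm[OF mul_closed[OF r aR] cR] by simp
    then have cp': "c \<in> add p (mul c t0)" using cp by simp
    have pR: "p \<in> R" using p idealD(1)[OF PI] by blast
    have "p \<in> add c (neg (mul c t0))"
      using reversibility[OF pR mul_closed[OF cR t0(1)] cR cp'] by blast
    also have "\<dots> = mul c ` add u (neg t0)"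
      using mul_distrib[OF cR one_closed neg_closed[OF t0(1)]] mul_neg[OF cR t0(1)] mul_one_right[OF cR] by simp
    finally obtain t where t: "t \<in> add u (neg t0)" and pt: "p = mul c t" by blast
    have tR: "t \<in> R" using t add_closed one_closed neg_closed[OF t0(1)] by blast
    have "t \<in> J" using prime_idealD(3)[OF P cR tR] pt p hpow_notin_prime_ideal[OF P aR a(2)] c_def PJ
      by blast
    moreover have "u \<in> add t t0"
      using reversibility[OF one_closed neg_closed[OF t0(1)] tR t] neg_neg[OF t0(1)] by simp
    ultimately have "J = R" using ideal_add[OF J _ t0(2)] ideal_one_eq_carrier[OF J] by blast
    then show ?thesis ..
  qed simp
qed

lemma artinian_zero_dimensional_finite_Spec:
  assumes art: "hartinian R add mul z" and zd: zero_dimensional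
  shows "finite (hSpec R add mul z)"
proof (rule ccontr)
  assume "infinite (hSpec R add mul z)"
  then obtain f :: "nat \<Rightarrow> 'a set" where inj: "inj f" and range: "range f \<subseteq> hSpec R add mul z"
    by (auto simp: infinite_iff_countable_subset)
  have f: "prime_ideal (f n)" for n using range unfolding hSpec_def by auto
  have f_ideal: "I \<in> f ` A \<Longrightarrow> ideal I" for I A using prime_idealD(1)[OF f] by auto
  define C where "C n = \<Inter>(f ` {..n})" for n
  have "ideal (C n)" for n unfolding C_def by (rule ideal_Inter[OF _ f_ideal]) simp
  moreover have "C (Suc n) \<subseteq> C n" for n unfolding C_def by (intro Inter_anti_mono image_mono) auto
  ultimately obtain m where "\<forall>n\<ge>m. C n = C m"
    using art[unfolded hartinian_def, rule_format, of C] by blast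
  then have "C (Suc m) = C m" by (rule stable_from_Suc)
  moreover have "C (Suc m) \<subseteq> f (Suc m)" unfolding C_def by blast
  ultimately have "\<Inter>(f ` {..m}) \<subseteq> f (Suc m)" unfolding C_def by simp
  then have "\<exists>I\<in>f ` {..m}. I \<subseteq> f (Suc m)"
    by (intro prime_ideal_Inter_subset[OF f] f_ideal) auto
  then obtain i where "i \<le> m" "f i \<subseteq> f (Suc m)" by blast
  then have "f (Suc m) = f i"
    using zero_dimensionalD[OF zd f prime_idealD(1)[OF f]] prime_idealD(2)[OF f] by blast
  then have "Suc m = i" by (rule injD[OF inj])
  then show False using \<open>i \<le> m\<close> by simp
qed

abbreviation Spec :: "'a set set" where "Spec \<equiv> hSpec R add mul z"
abbreviation V :: "'a set \<Rightarrow> 'a set set" where "V I \<equiv> hV R add mul z I"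

definition zariski_open :: "'a set set \<Rightarrow> bool" where
  "zariski_open U \<longleftrightarrow> (\<exists>I. ideal I \<and> U = Spec - V I)"

lemma V_Int: assumes "ideal I" "ideal J" shows "V (I \<inter> J) = V I \<union> V J"
  using prime_ideal_Int_subset[OF _ assms] unfolding hV_def hSpec_def by blast

text \<open>An arbitrary union of open sets Spec - V I is Spec - V J for the hyperideal J generated by
  all the I, namely the intersection of all hyperideals containing them.\<close>

lemma istopology_zariski_open: "istopology zariski_open"
  unfolding istopology_def
proof (intro conjI allI impI)
  fix S T assume "zariski_open S" "zariski_open T"
  then show "zariski_open (S \<inter> T)"
    unfolding zariski_open_def using V_Int ideal_Int by (metis Diff_Un)
next
  fix KK assume KK: "\<forall>K\<in>KK. zariski_open K"
  define II where "II = {I. ideal I \<and> Spec - V I \<in> KK}"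
  define J where "J = \<Inter>{L. ideal L \<and> \<Union>II \<subseteq> L}"
  have J: "ideal J" unfolding J_def
    by (rule ideal_Inter) (use ideal_carrier II_def idealD(1) in auto)
  have J_sub: "J \<subseteq> P \<longleftrightarrow> (\<forall>I\<in>II. I \<subseteq> P)" if "prime_ideal P" for P
    using prime_idealD(1)[OF that] unfolding J_def by blast
  have "\<Union>KK = Spec - V J"
  proof (intro set_eqI iffI)
    fix P assume "P \<in> \<Union>KK"
    then obtain K where K: "K \<in> KK" "P \<in> K" by blast
    then obtain I where I: "ideal I" "K = Spec - V I" using KK unfolding zariski_open_def by blast
    then have "I \<in> II" unfolding II_def using K by blast
    moreover have "prime_ideal P" "\<not> I \<subseteq> P" using K I unfolding hV_def hSpec_def by auto
    ultimately show "P \<in> Spec - V J" using J_sub unfolding hV_def hSpec_def by blast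
  next
    fix P assume "P \<in> Spec - V J"
    then have P: "prime_ideal P" "\<not> J \<subseteq> P" unfolding hV_def hSpec_def by auto
    then obtain I where "I \<in> II" "\<not> I \<subseteq> P" using J_sub by blast
    then show "P \<in> \<Union>KK" using P unfolding II_def hV_def hSpec_def by blast
  qed
  then show "zariski_open (\<Union>KK)" unfolding zariski_open_def using J by blast
qed

lemma openin_zariski: "openin (zariski R add mul z) = zariski_open"
  using istopology_zariski_open unfolding zariski_def zariski_open_def by simp

lemma V_Inter_primes:
  assumes zd: zero_dimensional and "finite F" "F \<noteq> {}" "F \<subseteq> Spec"
  shows "V (\<Inter>F) = F"
proof -
  have F: "\<And>Q. Q \<in> F \<Longrightarrow> prime_ideal Q" using assms(4) unfolding hSpec_def by blast
  have "P \<in> F" if P: "prime_ideal P" and sub: "\<Inter>F \<subseteq> P" for P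
  proof -
    obtain Q where "Q \<in> F" "Q \<subseteq> P"
      using prime_ideal_Inter_subset[OF P assms(2,3) _ sub] F prime_idealD(1) by blast
    then show ?thesis
      using zero_dimensionalD[OF zd F prime_idealD(1)[OF P]] prime_idealD(2)[OF P] by metis
  qed
  then show ?thesis using assms(4) unfolding hV_def hSpec_def by blast
qed

lemma zero_dimensional_finite_Spec_discrete:
  assumes zd: zero_dimensional and fin: "finite Spec"
  shows "zariski R add mul z = discrete_topology Spec"
  unfolding topology_eq openin_zariski openin_discrete_topology
proof (intro allI iffI)
  fix S assume "zariski_open S"
  then show "S \<subseteq> Spec" unfolding zariski_open_def by blast
next
  fix S assume S: "S \<subseteq> Spec"
  show "zariski_open S"
  proof (cases "S = Spec")
    case True
    have "V R = {}" using prime_idealD(2,1) idealD(1) unfolding hV_def hSpec_def by blast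
    then show ?thesis unfolding zariski_open_def using True ideal_carrier by blast
  next
    case False
    have Fin: "finite (Spec - S)" using fin by simp
    have "ideal (\<Inter>(Spec - S))"
      using False S by (intro ideal_Inter) (auto simp: hSpec_def prime_hyperideal_def)
    moreover have "S = Spec - V (\<Inter>(Spec - S))"
      using V_Inter_primes[OF zd Fin] False S by auto
    ultimately show ?thesis unfolding zariski_open_def by blast
  qed
qed

lemma noetherian_discrete_imp_zero_dimensional:
  assumes N: "hnoetherian R add mul z" and discrete: "zariski R add mul z = discrete_topology Spec"
  shows zero_dimensional
  unfolding zero_dimensional_def
proof (intro allI impI)
  fix P J assume P: "prime_ideal P" and J: "ideal J" and PJ: "P \<subseteq> J"
  show "J = P \<or> J = R"
  proof (rule disjCI)
    assume "J \<noteq> R"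
    with N J obtain M where M: "prime_ideal M" "J \<subseteq> M"
      by (rule noetherian_prime_ideal_above)
    have "openin (zariski R add mul z) (Spec - {P})" unfolding discrete by simp
    then obtain I where "ideal I" and I: "Spec - {P} = Spec - V I"
      unfolding openin_zariski zariski_open_def by blast
    have "P \<in> Spec" "M \<in> Spec" using P M unfolding hSpec_def by simp_all
    moreover have "V I \<subseteq> Spec" unfolding hV_def by blast
    ultimately have VI: "V I = {P}" using I by blast
    then have "I \<subseteq> P" unfolding hV_def by blast
    then have "M \<in> V I" using \<open>M \<in> Spec\<close> PJ M(2) unfolding hV_def by blast
    then have "M = P" using VI by simp
    then show "J = P" using PJ M by blast
  qed
qed

end

theorem mainTheorem12:
  fixes R :: "'a set" and add :: "'a \<Rightarrow> 'a \<Rightarrow> 'a set" and mul :: "'a \<Rightarrow> 'a \<Rightarrow> 'a"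
    and z u :: 'a
  assumes "hyperring R add mul z u"
    and "hnoetherian R add mul z"
  shows "(hartinian R add mul z \<longleftrightarrow>
            (zariski R add mul z = discrete_topology (hSpec R add mul z)
             \<and> finite (hSpec R add mul z)))
       \<and> (hartinian R add mul z \<longleftrightarrow>
            zariski R add mul z = discrete_topology (hSpec R add mul z))"
proof -
  interpret comm_hyperring R add mul z u by (rule comm_hyperring.intro) (rule assms(1))
  have "zariski R add mul z = discrete_topology Spec \<and> finite Spec" if "hartinian R add mul z"
    using that artinian_imp_zero_dimensional artinian_zero_dimensional_finite_Spec
      zero_dimensional_finite_Spec_discrete by blast
  moreover have "hartinian R add mul z" if "zariski R add mul z = discrete_topology Spec"
    using that assms(2) noetherian_discrete_imp_zero_dimensional
      noetherian_zero_dimensional_imp_artinian by blast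
  ultimately show ?thesis by blast
qed

end
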